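(* Let $n\geq 3$, and let $G_1$ and $G_2$ be the $n$-vertex triangulations defined as follows. $G_1$ is obtained from a triangulation $H$ with $\lfloor n/3\rfloor+2$ vertices and maximum degree at most six by inserting, into each face of $H$ with exactly $r$ exceptions, a new vertex adjacent to the three vertices of that face, where $r=0,1,2$ according as $n\equiv 2,1,0\pmod 3$. $G_2$ is obtained from a path on $n-2$ vertices by adding two vertices $a,b$, joining each of them to every path vertex, and adding the edge $(a,b)$. Then any sequence of flips transforming $G_1$ into a triangulation isomorphic to $G_2$ has length at least $3n-6-2\lfloor n/3\rfloor-28\geq \frac{7n}{3}-34$.
   Context: A triangulation means a simple combinatorial triangulation: a maximal planar graph without self-loops or multiple edges, together with a fixed rotation system; all faces are triangles. Flipping an edge $(a,b)$: removing $(a,b)$ leaves a unique quadrilateral face bounded by a cycle $(a,a',b,b')$, and the flip replaces $(a,b)$ by $(a',b')$; only flips keeping the triangulation simple are allowed. *)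

theory Defs
  imports Complex_Main
begin

text \<open>A triangulation is represented by its vertex set V and its set F of
  triangular faces (each face a 3-element vertex set).  The rotation system of a
  simple triangulation determines exactly this face set (up to orientation),
  and conversely.\<close>

definition edges :: "'a set set \<Rightarrow> 'a set set" where
  "edges F = {e. card e = 2 \<and> (\<exists>f\<in>F. e \<subseteq> f)}"

definition nbrs :: "'a set set \<Rightarrow> 'a \<Rightarrow> 'a set" where
  "nbrs F v = {u. {u, v} \<in> edges F}"

text \<open>Simple combinatorial triangulation = simplicial triangulated 2-sphere:
  every edge lies in exactly two faces, every vertex link is a single cycle,
  the complex is connected and has Euler characteristic 2.\<close>

definition is_triangulation :: "'a set \<Rightarrow> 'a set set \<Rightarrow> bool" where
  "is_triangulation V F \<longleftrightarrow>
     finite V \<and>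
     (\<forall>f\<in>F. f \<subseteq> V \<and> card f = 3) \<and>
     (\<forall>v\<in>V. \<exists>f\<in>F. v \<in> f) \<and>
     (\<forall>e\<in>edges F. card {f\<in>F. e \<subseteq> f} = 2) \<and>
     (\<forall>v\<in>V. \<forall>x\<in>nbrs F v. \<forall>y\<in>nbrs F v. (\<lambda>p q. {v, p, q} \<in> F)\<^sup>*\<^sup>* x y) \<and>
     (\<forall>x\<in>V. \<forall>y\<in>V. (\<lambda>p q. {p, q} \<in> edges F)\<^sup>*\<^sup>* x y) \<and>
     int (card V) - int (card (edges F)) + int (card F) = 2"

text \<open>Flip of edge {a,b} with adjacent faces {a,b,c}, {a,b,d} into edge {c,d};
  only allowed if {c,d} is not already an edge (simplicity).\<close>

definition flip :: "'a set set \<Rightarrow> 'a set set \<Rightarrow> bool" where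
  "flip F F' \<longleftrightarrow> (\<exists>a b c d. {a, b, c} \<in> F \<and> {a, b, d} \<in> F \<and> c \<noteq> d \<and>
      {c, d} \<notin> edges F \<and>
      F' = (F - {{a, b, c}, {a, b, d}}) \<union> {{a, c, d}, {b, c, d}})"

definition exc :: "nat \<Rightarrow> nat" where
  "exc n = (if n mod 3 = 2 then 0 else if n mod 3 = 1 then 1 else 2)"

definition is_G1 :: "nat \<Rightarrow> 'a set \<Rightarrow> 'a set set \<Rightarrow> bool" where
  "is_G1 n V F \<longleftrightarrow> (\<exists>W FH S ins.
     is_triangulation W FH \<and> card W = n div 3 + 2 \<and>
     (\<forall>v\<in>W. card (nbrs FH v) \<le> 6) \<and>
     W \<subseteq> V \<and> S \<subseteq> FH \<and> card S = exc n \<and>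
     bij_betw ins (FH - S) (V - W) \<and>
     F = S \<union> (\<Union>f\<in>FH - S. {{x, y, ins f} | x y. x \<in> f \<and> y \<in> f \<and> x \<noteq> y}))"

definition G2_edges :: "'a \<Rightarrow> 'a \<Rightarrow> 'a list \<Rightarrow> 'a set set" where
  "G2_edges a b p = {{a, b}} \<union> {{a, x} | x. x \<in> set p} \<union> {{b, x} | x. x \<in> set p}
      \<union> {{p ! i, p ! Suc i} | i. Suc i < length p}"

definition is_G2 :: "'a set \<Rightarrow> 'a set set \<Rightarrow> bool" where
  "is_G2 V F \<longleftrightarrow> is_triangulation V F \<and>
     (\<exists>a b p. a \<noteq> b \<and> distinct p \<and> a \<notin> set p \<and> b \<notin> set p \<and>
        V = {a, b} \<union> set p \<and> edges F = G2_edges a b p)"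

end

theory Submission
  imports Defs
begin

text \<open>A flip creates exactly one new edge, so after k flips at most k edges of the target
  are missing from G1.  The target, isomorphic to G2, has 3n - 6 edges; each of them contains
  an apex a or b or lies on the path.  In G1 every vertex has degree at most 12 (a vertex of H
  keeps its at most six neighbours and gains one per incident face), and every edge meets the
  floor(n/3) + 2 vertices of H, each of which lies on at most two path edges.  Hence at most
  12 + 12 + 2 (floor(n/3) + 2) edges of the target are already edges of G1.\<close>

lemma edges_flip_subset:
  assumes "flip F F'"
  shows "\<exists>e. edges F' \<subseteq> insert e (edges F)"
proof -
  from assms obtain a b c d where abc: "{a, b, c} \<in> F" and abd: "{a, b, d} \<in> F"
    and F': "F' = (F - {{a, b, c}, {a, b, d}}) \<union> {{a, c, d}, {b, c, d}}"
    unfolding flip_def by blast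
  have "edges F' \<subseteq> insert {c, d} (edges F)"
  proof
    fix e assume "e \<in> edges F'"
    then obtain g where g: "g \<in> F'" "e \<subseteq> g" and "card e = 2"
      unfolding edges_def by blast
    then obtain u v where uv: "e = {u, v}" by (meson card_2_iff)
    show "e \<in> insert {c, d} (edges F)"
    proof (cases "g \<in> F")
      case True
      with g \<open>card e = 2\<close> show ?thesis unfolding edges_def by blast
    next
      case False
      with g F' have "g = {a, c, d} \<or> g = {b, c, d}" by blast
      with g uv have "e = {c, d} \<or> e \<subseteq> {a, b, c} \<or> e \<subseteq> {a, b, d}" by auto
      with abc abd \<open>card e = 2\<close> show ?thesis unfolding edges_def by blast
    qed
  qed
  then show ?thesis by blast
qed

lemma card_new_edges_funpow_flip:
  assumes "(flip ^^ k) F F'"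
  shows "finite (edges F' - edges F) \<and> card (edges F' - edges F) \<le> k"
  using assms
proof (induction k arbitrary: F')
  case 0
  then show ?case by simp
next
  case (Suc k)
  then obtain F'' where "(flip ^^ k) F F''" and "flip F'' F'" by auto
  with Suc.IH have fin: "finite (edges F'' - edges F)" and card: "card (edges F'' - edges F) \<le> k"
    by blast+
  from edges_flip_subset[OF \<open>flip F'' F'\<close>] obtain e
    where "edges F' \<subseteq> insert e (edges F'')" by blast
  then have sub: "edges F' - edges F \<subseteq> insert e (edges F'' - edges F)" by blast
  have "card (insert e (edges F'' - edges F)) \<le> Suc k"
    using fin card by (simp add: card_insert_if)
  with sub fin show ?case by (meson card_mono finite_insert le_trans rev_finite_subset)
qed

lemma edges_containing_eq_image_nbrs:
  "{e \<in> edges F. v \<in> e} = (\<lambda>u. {u, v}) ` nbrs F v"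
proof (intro set_eqI iffI)
  fix e assume "e \<in> {e \<in> edges F. v \<in> e}"
  then have "e \<in> edges F" "v \<in> e" by auto
  then have "card e = 2" unfolding edges_def by simp
  then obtain x y where "e = {x, y}" by (meson card_2_iff)
  with \<open>v \<in> e\<close> obtain u where "e = {u, v}" by blast
  with \<open>e \<in> edges F\<close> show "e \<in> (\<lambda>u. {u, v}) ` nbrs F v" unfolding nbrs_def by blast
qed (auto simp: nbrs_def)

lemma triangulation_finite_faces:
  assumes "is_triangulation V F"
  shows "finite F"
proof -
  from assms have "finite V" and "F \<subseteq> Pow V" unfolding is_triangulation_def by auto
  then show ?thesis by (simp add: finite_subset)
qed

lemma nbrs_subset_vertices:
  assumes "\<forall>f\<in>F. f \<subseteq> V"
  shows "nbrs F v \<subseteq> V"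
  using assms by (auto simp: nbrs_def edges_def)

text \<open>Double counting the incidences (face at w, other vertex of that face): each face at w
  has two other vertices, and each edge at w lies in two faces.\<close>

lemma card_faces_at_eq_card_nbrs:
  assumes T: "is_triangulation V F" and "w \<in> V"
  shows "card {f \<in> F. w \<in> f} = card (nbrs F w)"
proof -
  have faces: "\<forall>f\<in>F. f \<subseteq> V \<and> card f = 3" and "finite V"
    and edge_faces: "\<forall>e\<in>edges F. card {f\<in>F. e \<subseteq> f} = 2"
    using T unfolding is_triangulation_def by auto
  have "finite F" using T by (rule triangulation_finite_faces)
  define Fw where "Fw = {f \<in> F. w \<in> f}"
  define N where "N = nbrs F w"
  have "finite Fw" using \<open>finite F\<close> unfolding Fw_def by simp
  have "N \<subseteq> V" unfolding N_def using faces by (simp add: nbrs_subset_vertices)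
  with \<open>finite V\<close> have "finite N" by (simp add: finite_subset)
  define P where "P = Sigma Fw (\<lambda>f. f - {w})"
  define Q where "Q = Sigma N (\<lambda>u. {f \<in> F. {u, w} \<subseteq> f})"
  have "card P = (\<Sum>f\<in>Fw. card (f - {w}))"
    unfolding P_def using \<open>finite Fw\<close> faces \<open>finite V\<close>
    by (intro card_SigmaI) (auto simp: Fw_def intro: finite_subset)
  also have "\<dots> = (\<Sum>f\<in>Fw. 2)" using faces by (intro sum.cong) (auto simp: Fw_def)
  finally have cP: "card P = 2 * card Fw" by simp
  have "card Q = (\<Sum>u\<in>N. card {f \<in> F. {u, w} \<subseteq> f})"
    unfolding Q_def using \<open>finite N\<close> \<open>finite F\<close> by (intro card_SigmaI) auto
  also have "\<dots> = (\<Sum>u\<in>N. 2)" using edge_faces by (intro sum.cong) (auto simp: N_def nbrs_def)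
  finally have cQ: "card Q = 2 * card N" by simp
  have "Q = (\<lambda>(f, u). (u, f)) ` P"
  proof (intro set_eqI iffI)
    fix z assume "z \<in> Q"
    then obtain u f where z: "z = (u, f)" and "{u, w} \<in> edges F" "f \<in> F" "{u, w} \<subseteq> f"
      unfolding Q_def N_def nbrs_def by auto
    then have "u \<noteq> w" unfolding edges_def by (cases "u = w") auto
    with z \<open>f \<in> F\<close> \<open>{u, w} \<subseteq> f\<close> show "z \<in> (\<lambda>(f, u). (u, f)) ` P"
      unfolding P_def Fw_def by force
  next
    fix z assume "z \<in> (\<lambda>(f, u). (u, f)) ` P"
    then obtain f u where z: "z = (u, f)" and "f \<in> F" "w \<in> f" "u \<in> f" "u \<noteq> w"
      unfolding P_def Fw_def by auto
    then have "{u, w} \<in> edges F" unfolding edges_def by auto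
    with z \<open>f \<in> F\<close> \<open>w \<in> f\<close> \<open>u \<in> f\<close> show "z \<in> Q" unfolding Q_def N_def nbrs_def by auto
  qed
  moreover have "inj_on (\<lambda>(f, u). (u, f)) P" by (auto simp: inj_on_def)
  ultimately have "card P = card Q" by (simp add: card_image)
  with cP cQ show ?thesis unfolding Fw_def N_def by simp
qed

definition stack_faces :: "'a set set \<Rightarrow> 'a set set \<Rightarrow> ('a set \<Rightarrow> 'a) \<Rightarrow> 'a set set" where
  "stack_faces F S ins =
     S \<union> (\<Union>f\<in>F - S. {{x, y, ins f} | x y. x \<in> f \<and> y \<in> f \<and> x \<noteq> y})"

lemma edges_stack_faces_cases:
  assumes "S \<subseteq> F" and "e \<in> edges (stack_faces F S ins)"
  shows "e \<in> edges F \<or> (\<exists>f\<in>F - S. \<exists>x\<in>f. e = {x, ins f})"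
proof -
  from assms(2) obtain g where g: "g \<in> stack_faces F S ins" "e \<subseteq> g" and "card e = 2"
    unfolding edges_def by blast
  show ?thesis
  proof (cases "g \<in> S")
    case True
    with assms(1) g \<open>card e = 2\<close> show ?thesis unfolding edges_def by blast
  next
    case False
    with g obtain f where f: "f \<in> F - S"
      and "g \<in> {{x, y, ins f} | x y. x \<in> f \<and> y \<in> f \<and> x \<noteq> y}"
      unfolding stack_faces_def by blast
    then have "g \<subseteq> insert (ins f) f" by blast
    from \<open>card e = 2\<close> obtain u v where uv: "e = {u, v}" by (meson card_2_iff)
    show ?thesis
    proof (cases "ins f \<in> e")
      case True
      with uv obtain x where "e = {x, ins f}" by blast
      moreover from this g \<open>g \<subseteq> _\<close> have "x \<in> insert (ins f) f" by blast
      moreover from \<open>card e = 2\<close> \<open>e = {x, ins f}\<close> have "x \<noteq> ins f" by auto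
      ultimately show ?thesis using f by blast
    next
      case False
      with g \<open>g \<subseteq> _\<close> have "e \<subseteq> f" by blast
      with f \<open>card e = 2\<close> show ?thesis unfolding edges_def by blast
    qed
  qed
qed

lemma nbrs_stack_faces_subset:
  assumes "S \<subseteq> F"
  shows "nbrs (stack_faces F S ins) v
           \<subseteq> nbrs F v \<union> ins ` {f \<in> F - S. v \<in> f} \<union> \<Union>{f \<in> F - S. ins f = v}"
proof
  fix u assume "u \<in> nbrs (stack_faces F S ins) v"
  then have "{u, v} \<in> edges (stack_faces F S ins)" unfolding nbrs_def by simp
  from edges_stack_faces_cases[OF assms this]
  show "u \<in> nbrs F v \<union> ins ` {f \<in> F - S. v \<in> f} \<union> \<Union>{f \<in> F - S. ins f = v}"
    unfolding nbrs_def by (auto simp: doubleton_eq_iff)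
qed

lemma nbrs_stack_faces_old_vertex:
  assumes T: "is_triangulation V F" and "S \<subseteq> F" and "ins ` (F - S) \<inter> V = {}"
    and "v \<in> V"
  shows "finite (nbrs (stack_faces F S ins) v)
         \<and> card (nbrs (stack_faces F S ins) v) \<le> 2 * card (nbrs F v)"
proof -
  let ?B = "nbrs F v \<union> ins ` {f \<in> F. v \<in> f}"
  have "\<Union>{f \<in> F - S. ins f = v} = {}" using assms(3,4) by blast
  with nbrs_stack_faces_subset[OF \<open>S \<subseteq> F\<close>] have sub: "nbrs (stack_faces F S ins) v \<subseteq> ?B"
    by blast
  have "finite F" using T by (rule triangulation_finite_faces)
  have "finite V" and "\<forall>f\<in>F. f \<subseteq> V" using T unfolding is_triangulation_def by auto
  then have "finite (nbrs F v)" by (meson nbrs_subset_vertices finite_subset)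
  with \<open>finite F\<close> have fin: "finite ?B" by simp
  have "card ?B \<le> card (nbrs F v) + card (ins ` {f \<in> F. v \<in> f})" by (rule card_Un_le)
  also have "\<dots> \<le> card (nbrs F v) + card {f \<in> F. v \<in> f}"
    using \<open>finite F\<close> by (simp add: card_image_le)
  also have "\<dots> = 2 * card (nbrs F v)"
    using card_faces_at_eq_card_nbrs[OF T \<open>v \<in> V\<close>] by simp
  finally show ?thesis using card_mono[OF fin sub] finite_subset[OF sub fin] by simp
qed

lemma nbrs_stack_faces_new_vertex:
  assumes T: "is_triangulation V F" and "S \<subseteq> F" and "inj_on ins (F - S)" and "v \<notin> V"
  shows "finite (nbrs (stack_faces F S ins) v) \<and> card (nbrs (stack_faces F S ins) v) \<le> 3"
proof -
  let ?B = "\<Union>{f \<in> F - S. ins f = v}"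
  have faces: "\<forall>f\<in>F. f \<subseteq> V \<and> card f = 3" using T unfolding is_triangulation_def by auto
  have "nbrs F v = {}"
  proof (rule ccontr)
    assume "nbrs F v \<noteq> {}"
    then obtain u where "{u, v} \<in> edges F" unfolding nbrs_def by auto
    then have "v \<in> nbrs F u" unfolding nbrs_def by (simp add: insert_commute)
    with faces nbrs_subset_vertices[of F V u] \<open>v \<notin> V\<close> show False by blast
  qed
  have "{f \<in> F - S. v \<in> f} = {}" using faces \<open>v \<notin> V\<close> by blast
  with \<open>nbrs F v = {}\<close> nbrs_stack_faces_subset[OF \<open>S \<subseteq> F\<close>, of ins v]
  have sub: "nbrs (stack_faces F S ins) v \<subseteq> ?B" by auto
  have "finite ?B \<and> card ?B \<le> 3"
  proof (cases "\<exists>f\<in>F - S. ins f = v")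
    case True
    then obtain f where f: "f \<in> F - S" "ins f = v" by blast
    with \<open>inj_on ins (F - S)\<close> have "?B = f" by (auto simp: inj_on_def)
    moreover have "card f = 3" using f faces by blast
    ultimately show ?thesis by (simp add: card_ge_0_finite)
  next
    case False
    then have "?B = {}" by blast
    then show ?thesis by (metis card.empty finite.emptyI le0)
  qed
  with sub show ?thesis using card_mono[OF _ sub] finite_subset[OF sub] by fastforce
qed

lemma card_nbrs_stack_faces_le:
  assumes T: "is_triangulation V F" and "S \<subseteq> F" and "inj_on ins (F - S)"
    and "ins ` (F - S) \<inter> V = {}" and "\<forall>w\<in>V. card (nbrs F w) \<le> 6"
  shows "finite (nbrs (stack_faces F S ins) v) \<and> card (nbrs (stack_faces F S ins) v) \<le> 12"
proof (cases "v \<in> V")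
  case True
  with nbrs_stack_faces_old_vertex[OF assms(1,2,4) True] assms(5) show ?thesis by fastforce
next
  case False
  with nbrs_stack_faces_new_vertex[OF assms(1,2,3) False] show ?thesis by simp
qed

lemma edges_stack_faces_meet:
  assumes "\<forall>f\<in>F. f \<subseteq> V" and "S \<subseteq> F" and "e \<in> edges (stack_faces F S ins)"
  shows "e \<inter> V \<noteq> {}"
proof -
  have "card e = 2" using assms(3) unfolding edges_def by simp
  from edges_stack_faces_cases[OF assms(2,3)] show ?thesis
  proof
    assume "e \<in> edges F"
    then obtain f where "f \<in> F" "e \<subseteq> f" unfolding edges_def by blast
    moreover have "e \<noteq> {}" using \<open>card e = 2\<close> by auto
    ultimately show ?thesis using assms(1) by blast
  next
    assume "\<exists>f\<in>F - S. \<exists>x\<in>f. e = {x, ins f}"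
    then show ?thesis using assms(1) by blast
  qed
qed

definition path_edges :: "'a list \<Rightarrow> 'a set set" where
  "path_edges p = {{p ! i, p ! Suc i} | i. Suc i < length p}"

lemma path_edges_image: "path_edges p = (\<lambda>i. {p ! i, p ! Suc i}) ` {..<length p - 1}"
  unfolding path_edges_def by force

lemma card_path_edges:
  assumes "distinct p"
  shows "card (path_edges p) = length p - 1"
proof -
  have "inj_on (\<lambda>i. {p ! i, p ! Suc i}) {..<length p - 1}"
  proof (rule inj_onI)
    fix i j
    assume "i \<in> {..<length p - 1}" "j \<in> {..<length p - 1}"
      and "{p ! i, p ! Suc i} = {p ! j, p ! Suc j}"
    with assms show "i = j" by (auto simp: doubleton_eq_iff nth_eq_iff_index_eq)
  qed
  then show ?thesis by (simp add: path_edges_image card_image)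
qed

text \<open>Each vertex of W lies on at most two path edges, so at most 2 |W| path edges meet W.\<close>

lemma card_path_edges_meeting_le:
  assumes "distinct p" and "finite W" and "\<forall>e\<in>E. e \<inter> W \<noteq> {}"
  shows "card (path_edges p \<inter> E) \<le> 2 * card W"
proof -
  define I where "I = {i. Suc i < length p \<and> {p ! i, p ! Suc i} \<in> E}"
  define J where "J = {i. i < length p \<and> p ! i \<in> W}"
  have "finite J" unfolding J_def by simp
  moreover have "finite {i. Suc i \<in> J}"
    using finite_vimageI[OF \<open>finite J\<close>, of Suc] by (simp add: vimage_def)
  moreover have "I \<subseteq> J \<union> {i. Suc i \<in> J}"
  proof
    fix i assume "i \<in> I"
    then have "Suc i < length p" and "{p ! i, p ! Suc i} \<in> E" unfolding I_def by simp_all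
    with assms(3) have "{p ! i, p ! Suc i} \<inter> W \<noteq> {}" by blast
    with \<open>Suc i < length p\<close> show "i \<in> J \<union> {i. Suc i \<in> J}" unfolding J_def by auto
  qed
  ultimately have "card I \<le> card (J \<union> {i. Suc i \<in> J})" by (simp add: card_mono)
  also have "\<dots> \<le> card J + card {i. Suc i \<in> J}" by (rule card_Un_le)
  also have "card {i. Suc i \<in> J} \<le> card J"
    using \<open>finite J\<close> by (intro card_inj_on_le[of Suc]) auto
  also have "card J \<le> card W"
    using assms(1,2) by (intro card_inj_on_le[of "(!) p"])
      (auto simp: J_def inj_on_def nth_eq_iff_index_eq)
  finally have "card I \<le> 2 * card W" by simp
  moreover have "path_edges p \<inter> E = (\<lambda>i. {p ! i, p ! Suc i}) ` I"
    unfolding path_edges_def I_def by blast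
  moreover have "finite I" unfolding I_def by (rule finite_subset[of _ "{..<length p}"]) auto
  ultimately show ?thesis using card_image_le[of I "\<lambda>i. {p ! i, p ! Suc i}"] by simp
qed

lemma path_edges_subset: "e \<in> path_edges p \<Longrightarrow> e \<subseteq> set p"
  unfolding path_edges_def by auto

lemma card_G2_edges:
  assumes "a \<noteq> b" "distinct p" "a \<notin> set p" "b \<notin> set p" "p \<noteq> []"
  shows "card (G2_edges a b p) = 3 * length p"
proof -
  define A where "A = (\<lambda>x. {a, x}) ` set p"
  define B where "B = (\<lambda>x. {b, x}) ` set p"
  define P where "P = path_edges p"
  have eq: "G2_edges a b p = insert {a, b} (A \<union> B \<union> P)"
    unfolding G2_edges_def A_def B_def P_def path_edges_def by blast
  have "inj_on (\<lambda>x. {a, x}) (set p)" "inj_on (\<lambda>x. {b, x}) (set p)"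
    by (auto simp: inj_on_def doubleton_eq_iff)
  then have "card A = length p" "card B = length p"
    unfolding A_def B_def using assms(2) by (simp_all add: card_image distinct_card)
  moreover have "card P = length p - 1" unfolding P_def using assms(2) by (rule card_path_edges)
  moreover have "finite A" "finite B" "finite P" unfolding A_def B_def P_def
    by (simp_all add: path_edges_image)
  moreover have "A \<inter> B = {}" unfolding A_def B_def using assms(1,3,4) by (auto simp: doubleton_eq_iff)
  moreover have "(A \<union> B) \<inter> P = {}" unfolding A_def B_def P_def
    using assms(3,4) path_edges_subset[of _ p] by blast
  moreover have "{a, b} \<notin> A \<union> B \<union> P" unfolding A_def B_def P_def
    using assms(1,3,4) path_edges_subset[of "{a, b}" p] by (auto simp: doubleton_eq_iff)
  ultimately show ?thesis
    unfolding eq using \<open>p \<noteq> []\<close> by (simp add: card_Un_disjoint)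
qed

lemma card_edges_G2:
  assumes "is_G2 V T" and "card V \<ge> 3"
  shows "card (edges T) = 3 * card V - 6"
proof -
  from assms(1) obtain a b p where ab: "a \<noteq> b" "distinct p" "a \<notin> set p" "b \<notin> set p"
    and V: "V = {a, b} \<union> set p" and "edges T = G2_edges a b p"
    unfolding is_G2_def by blast
  have "card V = length p + 2" using ab V by (simp add: distinct_card)
  with assms(2) have "p \<noteq> []" by auto
  with ab card_G2_edges[of a b p] \<open>card V = length p + 2\<close> \<open>edges T = _\<close> show ?thesis by simp
qed

lemma card_G2_edges_inter_G1_le:
  assumes "is_G1 n V G1" and "distinct p"
  shows "card (G2_edges a b p \<inter> edges G1) \<le> 2 * (n div 3) + 28"
proof -
  from assms(1) obtain W F S ins where T: "is_triangulation W F" and "card W = n div 3 + 2"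
    and "\<forall>w\<in>W. card (nbrs F w) \<le> 6" and "S \<subseteq> F" and ins: "bij_betw ins (F - S) (V - W)"
    and G1: "G1 = stack_faces F S ins"
    unfolding is_G1_def stack_faces_def by blast
  from ins have "inj_on ins (F - S)" "ins ` (F - S) \<inter> W = {}" unfolding bij_betw_def by auto
  have "finite W" "\<forall>f\<in>F. f \<subseteq> W" using T unfolding is_triangulation_def by auto
  define Ea where "Ea = {e \<in> edges G1. a \<in> e}"
  define Eb where "Eb = {e \<in> edges G1. b \<in> e}"
  define Ep where "Ep = path_edges p \<inter> edges G1"
  have apex: "finite {e \<in> edges G1. v \<in> e} \<and> card {e \<in> edges G1. v \<in> e} \<le> 12" for v
    using card_nbrs_stack_faces_le[OF T \<open>S \<subseteq> F\<close> \<open>inj_on ins (F - S)\<close> \<open>_ \<inter> W = {}\<close>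
        \<open>\<forall>w\<in>W. _\<close>, of v] card_image_le[of "nbrs G1 v" "\<lambda>u. {u, v}"]
    unfolding edges_containing_eq_image_nbrs G1 by auto
  have "card Ep \<le> 2 * card W" unfolding Ep_def
    using card_path_edges_meeting_le[OF assms(2) \<open>finite W\<close>]
      edges_stack_faces_meet[OF \<open>\<forall>f\<in>F. f \<subseteq> W\<close> \<open>S \<subseteq> F\<close>] G1 by blast
  have "finite Ep" unfolding Ep_def by (simp add: path_edges_image)
  have "G2_edges a b p \<inter> edges G1 \<subseteq> Ea \<union> Eb \<union> Ep"
    unfolding Ea_def Eb_def Ep_def G2_edges_def path_edges_def by blast
  then have "card (G2_edges a b p \<inter> edges G1) \<le> card (Ea \<union> Eb \<union> Ep)"
    using apex \<open>finite Ep\<close> by (intro card_mono) (auto simp: Ea_def Eb_def)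
  also have "\<dots> \<le> card Ea + card Eb + card Ep" by (meson add_le_mono card_Un_le le_trans order_refl)
  finally show ?thesis
    using apex[of a] apex[of b] \<open>card Ep \<le> _\<close> \<open>card W = _\<close> unfolding Ea_def Eb_def by linarith
qed

theorem mainTheorem5:
  fixes n k :: nat and V :: "'a set" and G1 T :: "'a set set"
  assumes "n \<ge> 3" and "finite V" and "card V = n"
    and "is_G1 n V G1"
    and "(flip ^^ k) G1 T"
    and "is_G2 V T"
  shows "int k \<ge> 3 * int n - 6 - 2 * int (n div 3) - 28 \<and>
         real_of_int (3 * int n - 6 - 2 * int (n div 3) - 28) \<ge> 7 * real n / 3 - 34"
proof
  from assms(6) obtain a b p where "distinct p" and T: "edges T = G2_edges a b p"
    unfolding is_G2_def by blast
  have "card (edges T) = 3 * n - 6" using card_edges_G2[OF assms(6)] assms(1,3) by simp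
  moreover have "card (edges T - edges G1) \<le> k"
    using card_new_edges_funpow_flip[OF assms(5)] by simp
  moreover have "card (edges T \<inter> edges G1) \<le> 2 * (n div 3) + 28"
    unfolding T using card_G2_edges_inter_G1_le[OF assms(4) \<open>distinct p\<close>] .
  moreover have "card (edges T) \<le> card (edges T \<inter> edges G1) + card (edges T - edges G1)"
    using card_Un_le[of "edges T \<inter> edges G1" "edges T - edges G1"] by (simp add: Int_Diff_Un)
  ultimately show "int k \<ge> 3 * int n - 6 - 2 * int (n div 3) - 28" by linarith
next
  have "3 * (n div 3) \<le> n" by simp
  then have "3 * real (n div 3) \<le> real n" by (metis of_nat_le_iff of_nat_mult of_nat_numeral)
  then show "real_of_int (3 * int n - 6 - 2 * int (n div 3) - 28) \<ge> 7 * real n / 3 - 34" by simp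
qed

end
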